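(* Let $n\geqslant 1$ and let $m_1,\ldots,m_n$ be nonnegative integers. Then, as rational functions of $x$, $$\|x_j^{m_i}\|^*_{1\leqslant i,j\leqslant n}(x-n+1,x-n+2,\ldots,x)=\prod_{1\leqslant i<j\leqslant n}(m_j-m_i)\times\prod_{i=1}^n\frac{(x)_{m_i}}{(x)_{i-1}},$$ where the left side means the polynomial $Q^*$ for $Q(x_1,\ldots,x_n)=\|x_j^{m_i}\|_{1\leqslant i,j\leqslant n}$ evaluated at $x_i=x-n+i$ for $i=1,\ldots,n$.
   Context: $(x)_0=1$ and $(x)_r=x(x-1)\cdots(x-r+1)$ for positive integers $r$. For a polynomial $Q=\sum_{j_1,\ldots,j_n} c_{j_1,\ldots,j_n}x_1^{j_1}\cdots x_n^{j_n}\in\mathbb{C}[x_1,\ldots,x_n]$, $Q^*$ denotes $\sum_{j_1,\ldots,j_n} c_{j_1,\ldots,j_n}(x_1)_{j_1}\cdots(x_n)_{j_n}$. $\|b_{ij}\|_{1\leqslant i,j\leqslant n}$ denotes the determinant of the matrix $(b_{ij})$. *)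

theory Defs
  imports "HOL-Library.Poly_Mapping" "HOL-Combinatorics.Permutations" Complex_Main
begin

type_synonym mpoly = "(nat \<Rightarrow>\<^sub>0 nat) \<Rightarrow>\<^sub>0 complex"

definition mvar :: "nat \<Rightarrow> mpoly" where
  "mvar j = Poly_Mapping.single (Poly_Mapping.single j 1) 1"

definition ffact_c :: "complex \<Rightarrow> nat \<Rightarrow> complex" where
  "ffact_c x r = (\<Prod>k<r. x - of_nat k)"

definition detn :: "nat \<Rightarrow> (nat \<Rightarrow> nat \<Rightarrow> 'a::comm_ring_1) \<Rightarrow> 'a" where
  "detn n b = (\<Sum>p | p permutes {1..n}. of_int (sign p) * (\<Prod>i=1..n. b i (p i)))"

text \<open>Q^* evaluated at the point v: each monomial x_1^{j_1}...x_k^{j_k} is replaced by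
  (x_1)_{j_1}...(x_k)_{j_k}, then evaluated at x_i = v i.\<close>
definition star_eval :: "mpoly \<Rightarrow> (nat \<Rightarrow> complex) \<Rightarrow> complex" where
  "star_eval Q v = (\<Sum>e\<in>Poly_Mapping.keys Q. Poly_Mapping.lookup Q e * (\<Prod>j\<in>Poly_Mapping.keys (e :: nat \<Rightarrow>\<^sub>0 nat). ffact_c (v j) (Poly_Mapping.lookup e j)))"

end

theory Submission
  imports Defs "Jordan_Normal_Form.Determinant"
begin

(* Expanding the determinant, Q^* at v is the determinant of the falling factorials (v_j)_{m_i}.
   At v_j = x - (n - j), multiplying column j by (x)_{n-j} turns the (i, j) entry into
   (x)_{m_i + n - j} = (x)_{m_i} (x - m_i)_{n-j}. Pulling (x)_{m_i} out of row i leaves the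
   falling-factorial Vandermonde determinant det ((w_i)_{n-j}) with w_i = x - m_i. Like the ordinary
   Vandermonde determinant it equals prod_{i<j} (w_i - w_j), here prod_{i<j} (m_j - m_i), by column
   operations based on (w)_{k+1} = (w)_k (w - k) that reduce the size by one. *)

lemma ffact_c_0 [simp]: "ffact_c y 0 = 1"
  by (simp add: ffact_c_def)

lemma ffact_c_Suc: "ffact_c y (Suc k) = ffact_c y k * (y - of_nat k)"
  by (simp add: ffact_c_def)

lemma ffact_c_add: "ffact_c y (a + b) = ffact_c y a * ffact_c (y - of_nat a) b"
  by (induction b) (simp_all add: ffact_c_Suc algebra_simps)

lemma ffact_c_shift_swap:
  "ffact_c (y - of_nat k) l * ffact_c y k = ffact_c y l * ffact_c (y - of_nat l) k"
  by (metis ffact_c_add add.commute mult.commute)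

definition star_monomial :: "(nat \<Rightarrow>\<^sub>0 nat) \<Rightarrow> (nat \<Rightarrow> complex) \<Rightarrow> complex" where
  "star_monomial e v = (\<Prod>j\<in>Poly_Mapping.keys e. ffact_c (v j) (Poly_Mapping.lookup e j))"

lemma star_eval_eq_sum_superset:
  assumes "finite S" and "Poly_Mapping.keys Q \<subseteq> S"
  shows "star_eval Q v = (\<Sum>e\<in>S. Poly_Mapping.lookup Q e * star_monomial e v)"
  unfolding star_eval_def star_monomial_def
  by (rule sum.mono_neutral_left) (use assms in \<open>auto simp: in_keys_iff\<close>)

lemma star_eval_zero [simp]: "star_eval 0 v = 0"
  by (simp add: star_eval_def)

lemma star_eval_add: "star_eval (P + Q) v = star_eval P v + star_eval Q v"
proof -
  let ?S = "Poly_Mapping.keys P \<union> Poly_Mapping.keys Q"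
  have "star_eval (P + Q) v = (\<Sum>e\<in>?S. Poly_Mapping.lookup (P + Q) e * star_monomial e v)"
    using keys_add[of P Q] by (intro star_eval_eq_sum_superset) auto
  also have "\<dots> = star_eval P v + star_eval Q v"
    by (simp add: star_eval_eq_sum_superset[of ?S] lookup_add distrib_right sum.distrib)
  finally show ?thesis .
qed

lemma star_eval_sum: "star_eval (\<Sum>i\<in>I. Q i) v = (\<Sum>i\<in>I. star_eval (Q i) v)"
  by (induction I rule: infinite_finite_induct) (simp_all add: star_eval_add)

lemma star_eval_single: "star_eval (Poly_Mapping.single e c) v = c * star_monomial e v"
  by (subst star_eval_eq_sum_superset[of "{e}"]) auto

lemma star_monomial_sum_single:
  assumes "inj_on p I" and "finite I"
  shows "star_monomial (\<Sum>i\<in>I. Poly_Mapping.single (p i) (k i)) v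
    = (\<Prod>i\<in>I. ffact_c (v (p i)) (k i))"
proof -
  define e where "e = (\<Sum>i\<in>I. Poly_Mapping.single (p i) (k i))"
  have lookup_e: "Poly_Mapping.lookup e j = (\<Sum>i\<in>I. if p i = j then k i else 0)" for j
    by (simp add: e_def lookup_sum lookup_single when_def)
  have lookup_e_image: "Poly_Mapping.lookup e (p i) = k i" if "i \<in> I" for i
    using that assms by (simp add: lookup_e inj_on_eq_iff sum.delta cong: if_cong)
  have "Poly_Mapping.lookup e j = 0" if "j \<notin> p ` I" for j
    using that by (auto simp: lookup_e intro!: sum.neutral)
  then have "Poly_Mapping.keys e \<subseteq> p ` I"
    by (auto simp: in_keys_iff)
  then have "star_monomial e v = (\<Prod>j\<in>p ` I. ffact_c (v j) (Poly_Mapping.lookup e j))"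
    unfolding star_monomial_def
    by (intro prod.mono_neutral_left) (use assms in \<open>auto simp: in_keys_iff\<close>)
  also have "\<dots> = (\<Prod>i\<in>I. ffact_c (v (p i)) (k i))"
    using assms(1) by (simp add: prod.reindex lookup_e_image)
  finally show ?thesis
    unfolding e_def .
qed

lemma mvar_power: "mvar j ^ k = Poly_Mapping.single (Poly_Mapping.single j k) 1"
  by (induction k) (simp_all add: mvar_def mult_single flip: single_add)

lemma prod_mvar_powers:
  "(\<Prod>i\<in>I. mvar (p i) ^ k i)
    = Poly_Mapping.single (\<Sum>i\<in>I. Poly_Mapping.single (p i) (k i)) 1"
  by (induction I rule: infinite_finite_induct) (simp_all add: mvar_power mult_single)

lemma star_eval_detn_powers:
  "star_eval (detn n (\<lambda>i j. mvar j ^ k i)) v = detn n (\<lambda>i j. ffact_c (v j) (k i))"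
proof -
  have "star_eval (of_int (sign p) * (\<Prod>i=1..n. mvar (p i) ^ k i)) v
      = of_int (sign p) * (\<Prod>i=1..n. ffact_c (v (p i)) (k i))" if "p permutes {1..n}" for p
  proof -
    have "of_int (sign p) * (\<Prod>i=1..n. mvar (p i) ^ k i)
        = Poly_Mapping.single (\<Sum>i=1..n. Poly_Mapping.single (p i) (k i)) (of_int (sign p))"
      unfolding prod_mvar_powers single_of_int[symmetric] mult_single by simp
    with that show ?thesis
      by (simp add: star_eval_single star_monomial_sum_single permutes_inj_on)
  qed
  then show ?thesis
    by (simp add: detn_def star_eval_sum)
qed

lemma detn_cong:
  assumes "\<And>i j. i \<in> {1..n} \<Longrightarrow> j \<in> {1..n} \<Longrightarrow> a i j = b i j"
  shows "detn n a = detn n b"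
proof -
  have "(\<Prod>i=1..n. a i (p i)) = (\<Prod>i=1..n. b i (p i))" if "p permutes {1..n}" for p
    using permutes_in_image[OF that] by (intro prod.cong refl assms) auto
  then show ?thesis
    unfolding detn_def by (intro sum.cong) simp_all
qed

lemma detn_mult_rows: "detn n (\<lambda>i j. c i * b i j) = (\<Prod>i=1..n. c i) * detn n b"
  by (simp add: detn_def prod.distrib sum_distrib_left mult_ac)

lemma detn_mult_cols: "detn n (\<lambda>i j. b i j * c j) = detn n b * (\<Prod>j=1..n. c j)"
proof -
  have "of_int (sign p) * (\<Prod>i=1..n. b i (p i) * c (p i))
      = of_int (sign p) * (\<Prod>i=1..n. b i (p i)) * (\<Prod>j=1..n. c j)"
    if "p permutes {1..n}" for p
    using prod.permute[OF that, of c] by (simp add: prod.distrib comp_def mult.assoc)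
  then show ?thesis
    unfolding detn_def sum_distrib_right by (intro sum.cong) simp_all
qed

lemma detn_eq_det_mat: "detn n b = det (mat n n (\<lambda>(i, j). b (Suc i) (Suc j)))"
proof -
  have Suc_bij: "bij_betw Suc {0..<n} {1..n}"
    by (rule bij_betw_byWitness[where f' = "\<lambda>i. i - 1"]) auto
  have pred_bij: "bij_betw (\<lambda>i. i - 1) {1..n} {0..<n}"
    by (rule bij_betw_byWitness[where f' = Suc]) auto
  have in_range: "q i < n" if "q permutes {0..<n}" "i < n" for q i
    using permutes_in_image[OF that(1)] that(2) by simp
  have "det (mat n n (\<lambda>(i, j). b (Suc i) (Suc j)))
      = (\<Sum>q | q permutes {0..<n}. signof q * (\<Prod>i=0..<n. b (Suc i) (Suc (q i))))"
    by (subst det_def'[of _ n]) (auto simp: in_range intro!: sum.cong prod.cong)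
  also have "\<dots> = detn n b"
    unfolding detn_def
  proof (rule sum.reindex_bij_witness[of _
        "map_permutation {1..n} (\<lambda>i. i - 1)" "map_permutation {0..<n} Suc"])
    fix q assume "q \<in> {q. q permutes {0..<n}}"
    then have q: "q permutes {0..<n}" by simp
    define p where "p = map_permutation {0..<n} Suc q"
    show "map_permutation {1..n} (\<lambda>i. i - 1) p = q"
      unfolding p_def by (rule map_permutation_compose_inv[OF Suc_bij q]) simp
    show "p \<in> {p. p permutes {1..n}}"
      using map_permutation_permutes[OF Suc_bij q] by (simp add: p_def)
    have "sign p = sign q"
      unfolding p_def by (rule sign_map_permutation[OF _ q]) (auto simp: inj_on_def)
    moreover have "(\<Prod>i=1..n. b i (p i)) = (\<Prod>i=0..<n. b (Suc i) (Suc (q i)))"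
      using prod.reindex_bij_betw[OF Suc_bij, of "\<lambda>i. b i (p i)", symmetric]
      by (simp add: p_def map_permutation_apply)
    ultimately show "of_int (sign p) * (\<Prod>i=1..n. b i (p i))
        = signof q * (\<Prod>i=0..<n. b (Suc i) (Suc (q i)))"
      by simp
  next
    fix p assume "p \<in> {p. p permutes {1..n}}"
    then have p: "p permutes {1..n}" by simp
    show "map_permutation {0..<n} Suc (map_permutation {1..n} (\<lambda>i. i - 1) p) = p"
      by (rule map_permutation_compose_inv[OF pred_bij p]) simp
    show "map_permutation {1..n} (\<lambda>i. i - 1) p \<in> {q. q permutes {0..<n}}"
      using map_permutation_permutes[OF pred_bij p] by simp
  qed
  finally show ?thesis ..
qed

lemma det_mat_mult_rows:
  "det (mat n n (\<lambda>(i, j). c i * a i j)) = (\<Prod>i<n. c i) * det (mat n n (\<lambda>(i, j). a i j))"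
proof -
  have in_range: "p i < n" if "p permutes {0..<n}" "i < n" for p i
    using permutes_in_image[OF that(1)] that(2) by simp
  have "det (mat n n (\<lambda>(i, j). c i * a i j))
      = (\<Sum>p | p permutes {0..<n}. (\<Prod>i<n. c i) * (signof p * (\<Prod>i=0..<n. a i (p i))))"
    by (subst det_def'[of _ n])
      (auto simp: prod.distrib lessThan_atLeast0 in_range mult_ac intro!: sum.cong prod.cong)
  also have "\<dots> = (\<Prod>i<n. c i) * det (mat n n (\<lambda>(i, j). a i j))"
    by (subst det_def'[of _ n]) (auto simp: sum_distrib_left in_range intro!: sum.cong prod.cong)
  finally show ?thesis .
qed

lemma prod_upper_pairs_lessThan_Suc:
  "(\<Prod>i<Suc n. \<Prod>j\<in>{i<..<Suc n}. f i j) = (\<Prod>i<n. f i n) * (\<Prod>i<n. \<Prod>j\<in>{i<..<n}. f i j)"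
proof -
  have "{i<..<Suc n} = insert n {i<..<n}" if "i < n" for i
    using that by auto
  moreover have "{n<..<Suc n} = {}"
    by auto
  ultimately show ?thesis
    by (simp add: prod.distrib)
qed

lemma det_falling_factorial_vandermonde:
  "det (mat n n (\<lambda>(i, j). ffact_c (w i) (n - Suc j))) = (\<Prod>i<n. \<Prod>j\<in>{i<..<n}. w i - w j)"
proof (induction n)
  case 0
  then show ?case by simp
next
  case (Suc n)
  define A where "A = mat (Suc n) (Suc n) (\<lambda>(i, j). ffact_c (w i) (n - j))"
  define E :: "complex mat" where "E = mat (Suc n) (Suc n) (\<lambda>(k, j).
    if k = j then 1 else if k = Suc j then - (w n - of_nat (n - Suc j)) else 0)"
  define B where "B = mat (Suc n) (Suc n) (\<lambda>(i, j).
    if j = n then 1 else (w i - w n) * ffact_c (w i) (n - Suc j))"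
  have carrier: "A \<in> carrier_mat (Suc n) (Suc n)" "E \<in> carrier_mat (Suc n) (Suc n)"
    "B \<in> carrier_mat (Suc n) (Suc n)"
    by (auto simp: A_def E_def B_def)
  have "det E = 1"
  proof -
    have "det E = prod_list (diag_mat E)"
      by (rule det_lower_triangular[OF _ carrier(2)]) (auto simp: E_def)
    also have "diag_mat E = replicate (Suc n) 1"
      by (intro nth_equalityI) (simp_all add: diag_mat_def E_def del: upt_Suc replicate_Suc)
    finally show ?thesis by simp
  qed
  \<comment> \<open>E subtracts (w_n - (n - 1 - j)) times column j + 1 from column j; by
    (y)_(k+1) = (y)_k (y - k) this leaves 1 as the only nonzero entry of the last row\<close>
  have "A * E = B"
  proof (rule eq_matI)
    fix i j assume "i < dim_row B" and "j < dim_col B"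
    then have i: "i < Suc n" and j: "j < Suc n" by (auto simp: B_def)
    have "(A * E) $$ (i, j) = (\<Sum>k<Suc n. A $$ (i, k) * E $$ (k, j))"
      using i j carrier by (simp add: scalar_prod_def lessThan_atLeast0)
    also have "\<dots> = (\<Sum>k<Suc n. (if k = j then A $$ (i, k) else 0)
        + (if k = Suc j then A $$ (i, k) * - (w n - of_nat (n - Suc j)) else 0))"
      using j by (intro sum.cong) (auto simp: E_def)
    also have "\<dots> = A $$ (i, j)
        + (if Suc j < Suc n then A $$ (i, Suc j) * - (w n - of_nat (n - Suc j)) else 0)"
      using j by (auto simp: sum.distrib less_Suc_eq)
    also have "\<dots> = B $$ (i, j)"
    proof (cases "j = n")
      case False
      then have "n - j = Suc (n - Suc j)" using j by simp
      with i j False show ?thesis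
        by (simp add: A_def B_def ffact_c_Suc algebra_simps)
    qed (use i in \<open>simp add: A_def B_def\<close>)
    finally show "(A * E) $$ (i, j) = B $$ (i, j)" .
  qed (auto simp: A_def E_def B_def)
  then have "det A = det B"
    using det_mult[OF carrier(1,2)] \<open>det E = 1\<close> by simp
  also have "det B = (\<Sum>j<Suc n. B $$ (n, j) * cofactor B n j)"
    by (rule laplace_expansion_row[OF carrier(3)]) simp
  also have "\<dots> = det (mat_delete B n n)"
    by (simp add: B_def cofactor_def)
  also have "mat_delete B n n = mat n n (\<lambda>(i, j). (w i - w n) * ffact_c (w i) (n - Suc j))"
    by (rule eq_matI) (auto simp: mat_delete_def B_def)
  also have "det \<dots> = (\<Prod>i<n. w i - w n) * (\<Prod>i<n. \<Prod>j\<in>{i<..<n}. w i - w j)"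
    by (simp add: det_mat_mult_rows Suc.IH)
  finally show ?case
    unfolding prod_upper_pairs_lessThan_Suc by (simp add: A_def)
qed

lemma detn_falling_factorial_vandermonde:
  "detn n (\<lambda>i j. ffact_c (w i) (n - j)) = (\<Prod>i=1..n. \<Prod>j\<in>{i<..n}. w i - w j)"
proof -
  have "(\<Prod>i=1..n. \<Prod>j\<in>{i<..n}. w i - w j)
      = (\<Prod>i<n. \<Prod>j\<in>{i<..<n}. w (Suc i) - w (Suc j))"
  proof -
    have "{1..n} = {Suc 0..<Suc n}" "{..<n} = {0..<n}"
      and "\<And>i. {i<..n} = {Suc i..<Suc n}" "\<And>i. {i<..<n} = {Suc i..<n}"
      by auto
    then show ?thesis
      by (simp only: prod.shift_bounds_Suc_ivl)
  qed
  then show ?thesis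
    using det_falling_factorial_vandermonde[of n "\<lambda>i. w (Suc i)"] by (simp add: detn_eq_det_mat)
qed

theorem corollary2p1:
  fixes n :: nat and m :: "nat \<Rightarrow> nat" and x :: complex
  assumes "n \<ge> 1"
    and "(\<Prod>i=1..n. ffact_c x (i - 1)) \<noteq> 0"
  shows "star_eval (detn n (\<lambda>i j. mvar j ^ m i)) (\<lambda>i. x - of_nat n + of_nat i)
       = of_int (\<Prod>i=1..n. \<Prod>j\<in>{i<..n}. (int (m j) - int (m i)))
         * (\<Prod>i=1..n. ffact_c x (m i) / ffact_c x (i - 1))"
proof -
  define v where "v = (\<lambda>i. x - of_nat n + of_nat i)"
  have entry: "ffact_c (v j) (m i) * ffact_c x (n - j)
      = ffact_c x (m i) * ffact_c (x - of_nat (m i)) (n - j)"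
    if "j \<in> {1..n}" for i j
  proof -
    have "v j = x - of_nat (n - j)"
      using that by (simp add: v_def of_nat_diff)
    then show ?thesis
      by (simp add: ffact_c_shift_swap)
  qed
  have "detn n (\<lambda>i j. ffact_c (v j) (m i)) * (\<Prod>j=1..n. ffact_c x (n - j))
      = (\<Prod>i=1..n. ffact_c x (m i)) * detn n (\<lambda>i j. ffact_c (x - of_nat (m i)) (n - j))"
    unfolding detn_mult_cols[symmetric] detn_mult_rows[symmetric]
    by (rule detn_cong) (simp add: entry)
  also have "detn n (\<lambda>i j. ffact_c (x - of_nat (m i)) (n - j))
      = of_int (\<Prod>i=1..n. \<Prod>j\<in>{i<..n}. (int (m j) - int (m i)))"
    by (simp add: detn_falling_factorial_vandermonde)
  also have "(\<Prod>j=1..n. ffact_c x (n - j)) = (\<Prod>i=1..n. ffact_c x (i - 1))"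
    using prod.atLeastAtMost_rev[of "\<lambda>i. ffact_c x (i - 1)" 1 n] by simp
  finally show ?thesis
    using assms(2) by (simp add: star_eval_detn_powers v_def prod_dividef field_simps)
qed

end
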